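(* Every folded ribbon $3$-stick unknot $\mathcal{U}_{w,F}$ with ribbon linking number $\operatorname{Lk}(\mathcal{U}_{w,F})=\pm1$ satisfies $\operatorname{Rib}(\mathcal{U}_{w,F})\ge\sqrt{3}$; hence the minimum folded ribbonlength of such unknots is bounded below by $\sqrt3$, and the minimum value is achieved when $\mathcal{U}$ is an equilateral triangle.
   Context: A folded ribbon $3$-stick unknot corresponds to an unknot diagram $\mathcal{U}$ with three edges forming a non-degenerate triangle. For width $w>0$, $\mathcal{U}_{w,F}$ is a flat strip of width $w$ centred on $\mathcal{U}$ (boundary parallel to and at distance $w/2$ from each edge), folded at each vertex along a fold line through the vertex perpendicular to the bisector of the angle there; it is a piecewise-linear immersion of a Möbius band whose only singularities are the pairwise disjoint fold lines; the folding information $F$ records which layer lies on top at each fold. $\operatorname{Rib}(\mathcal{U}_{w,F})=\operatorname{Len}(\mathcal{U})/w$. The ribbon linking number $\operatorname{Lk}(\mathcal{U}_{w,F})$ is one half the sum of the signs (right-hand rule) of the crossings between the oriented diagram and the ribbon's boundary curve (oriented parallel to the diagram). *)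

theory Defs
  imports "HOL-Analysis.Analysis"
begin

(* A 3-stick unknot diagram is given
   by its vertices V 0, V 1, V 2 (only these values of V matter); edge i runs from
   V i to V (nxt i), indices taken mod 3. *)

definition nxt :: "nat \<Rightarrow> nat" where "nxt i = Suc i mod 3"
definition prv :: "nat \<Rightarrow> nat" where "prv i = (i + 2) mod 3"

(* planar cross product; positive iff b is counterclockwise from a *)
definition cross :: "complex \<Rightarrow> complex \<Rightarrow> real" where
  "cross a b = Im (cnj a * b)"

definition edir :: "(nat \<Rightarrow> complex) \<Rightarrow> nat \<Rightarrow> complex" where
  "edir V i = (V (nxt i) - V i) / complex_of_real (cmod (V (nxt i) - V i))"

(* direction of the fold line at vertex i: the line through V i perpendicular to
   the bisector of the (interior) angle at V i *)
definition fdir :: "(nat \<Rightarrow> complex) \<Rightarrow> nat \<Rightarrow> complex" where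
  "fdir V i = edir V (prv i) + edir V i"

(* the fold line at vertex i: the part of that line lying in the ribbon of width w
   (i.e. at distance \<le> w/2 from the edge lines through V i) *)
definition fold_line :: "(nat \<Rightarrow> complex) \<Rightarrow> real \<Rightarrow> nat \<Rightarrow> complex set" where
  "fold_line V w i =
     {V i + complex_of_real s * fdir V i | s. \<bar>s * cross (edir V i) (fdir V i)\<bar> \<le> w / 2}"

(* endpoint of the fold line at vertex i lying on the boundary line of the strip of
   edge j on side \<sigma> (\<sigma> = 1: left of edge j, \<sigma> = -1: right of edge j) *)
definition fold_end :: "(nat \<Rightarrow> complex) \<Rightarrow> real \<Rightarrow> nat \<Rightarrow> nat \<Rightarrow> real \<Rightarrow> complex" where
  "fold_end V w i j \<sigma> =
     V i + complex_of_real (\<sigma> * w / (2 * cross (edir V j) (fdir V i))) * fdir V i"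

(* the piece of the ribbon boundary running along edge k on side \<sigma>: parallel to
   edge k at distance w/2, between the fold lines at V k and V (nxt k) *)
definition bdry_seg :: "(nat \<Rightarrow> complex) \<Rightarrow> real \<Rightarrow> nat \<Rightarrow> real \<Rightarrow> complex set" where
  "bdry_seg V w k \<sigma> = closed_segment (fold_end V w k k \<sigma>) (fold_end V w (nxt k) k \<sigma>)"

definition diag_edge :: "(nat \<Rightarrow> complex) \<Rightarrow> nat \<Rightarrow> complex set" where
  "diag_edge V j = closed_segment (V j) (V (nxt j))"

(* folding information: F i = True iff at the fold at V i the outgoing layer (strip of
   edge i) lies on top of the incoming layer (strip of edge prv i).
   over F j k: the strip of edge k lies above the strip of edge j (j \<noteq> k); the
   layering of two strips is determined by the fold at their common vertex. *)
definition over :: "(nat \<Rightarrow> bool) \<Rightarrow> nat \<Rightarrow> nat \<Rightarrow> bool" where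
  "over F j k = (if k = nxt j then F k else \<not> F j)"

(* sign (right-hand rule) of a crossing between diagram edge j and a boundary piece
   along edge k, both oriented parallel to the diagram: sign of cross(over, under) *)
definition crossing_sign :: "(nat \<Rightarrow> complex) \<Rightarrow> (nat \<Rightarrow> bool) \<Rightarrow> nat \<Rightarrow> nat \<Rightarrow> real" where
  "crossing_sign V F j k =
     (if over F j k then sgn (cross (edir V k) (edir V j))
      else sgn (cross (edir V j) (edir V k)))"

definition ribbon_Lk :: "(nat \<Rightarrow> complex) \<Rightarrow> real \<Rightarrow> (nat \<Rightarrow> bool) \<Rightarrow> real" where
  "ribbon_Lk V w F =
     (1/2) * (\<Sum>j<3. \<Sum>k\<in>{..<3} - {j}. \<Sum>\<sigma>\<in>{-1, 1::real}.
        if diag_edge V j \<inter> bdry_seg V w k \<sigma> \<noteq> {} then crossing_sign V F j k else 0)"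

definition folded_ribbon_3stick :: "(nat \<Rightarrow> complex) \<Rightarrow> real \<Rightarrow> bool" where
  "folded_ribbon_3stick V w \<longleftrightarrow>
     \<not> collinear {V 0, V 1, V 2} \<and> w > 0 \<and>
     (\<forall>i<3. \<forall>j<3. i \<noteq> j \<longrightarrow> fold_line V w i \<inter> fold_line V w j = {})"

definition diag_len :: "(nat \<Rightarrow> complex) \<Rightarrow> real" where
  "diag_len V = (\<Sum>i<3. cmod (V (nxt i) - V i))"

definition ribbonlength :: "(nat \<Rightarrow> complex) \<Rightarrow> real \<Rightarrow> real" where
  "ribbonlength V w = diag_len V / w"

definition equilateral :: "(nat \<Rightarrow> complex) \<Rightarrow> bool" where
  "equilateral V \<longleftrightarrow> V 0 \<noteq> V 1 \<and> cmod (V 1 - V 0) = cmod (V 2 - V 1)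
     \<and> cmod (V 2 - V 1) = cmod (V 0 - V 2)"

end

theory Submission
  imports Defs
begin

(* Write t_i = tan(alpha_i / 2) for the interior angles alpha_i.  The fold lines at the two ends of
   edge i meet at distance l_i / (t_i + t_(i+1)) from that edge, so disjointness of the fold lines
   of the width-w ribbon forces l_i > (w/2) (t_i + t_(i+1)).  Summing, Len > w (t_0 + t_1 + t_2);
   the half-angles add up to pi/2, so t_0 t_1 + t_1 t_2 + t_2 t_0 = 1 and hence
   t_0 + t_1 + t_2 >= sqrt 3.  The bound uses only the disjointness of the fold lines, not the
   linking number.  Conversely, the equilateral triangle with side 1 admits every width
   w < sqrt 3, and a suitable folding then has Lk = +-1, so Rib = 3/w comes arbitrarily close
   to sqrt 3. *)

(* Stated with Suc 0 because the simplifier rewrites the numeral 1 :: nat to Suc 0. *)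
lemma nxt_prv_simps [simp]:
  "nxt 0 = 1" "nxt (Suc 0) = 2" "nxt 2 = 0" "prv 0 = 2" "prv (Suc 0) = 0" "prv 2 = 1"
  by (simp_all add: nxt_def prv_def)

lemma less_3_cases:
  assumes "i < (3::nat)"
  obtains "i = 0" | "i = 1" | "i = 2"
  using assms by linarith

lemma prv_nxt: "i < 3 \<Longrightarrow> prv (nxt i) = i"
  by (erule less_3_cases) simp_all

lemma nxt_prv: "i < 3 \<Longrightarrow> nxt (prv i) = i"
  by (erule less_3_cases) simp_all

lemma prv_less_3: "i < 3 \<Longrightarrow> prv i < 3"
  by (simp add: prv_def)

lemma nxt_less_3: "i < 3 \<Longrightarrow> nxt i < 3"
  by (simp add: nxt_def)

lemma nxt_neq: "i < 3 \<Longrightarrow> nxt i \<noteq> i"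
  by (erule less_3_cases) simp_all

lemma sum_less_3: "(\<Sum>i<(3::nat). f i) = f 0 + f 1 + (f 2 :: 'a :: comm_monoid_add)"
  by (simp add: eval_nat_numeral add.assoc)

section \<open>Planar cross product\<close>

lemma cross_swap: "cross b a = - cross a b"
  by (simp add: cross_def algebra_simps)

lemma cross_self [simp]: "cross a a = 0"
  by (simp add: cross_def algebra_simps)

lemma cross_add_right: "cross a (b + c) = cross a b + cross a c"
  and cross_diff_right: "cross a (b - c) = cross a b - cross a c"
  and cross_of_real_right: "cross a (of_real r * b) = r * cross a b"
  and cross_of_real_left: "cross (of_real r * a) b = r * cross a b"
  by (simp_all add: cross_def algebra_simps)

lemma cross_mult_mult: "cross (u * a) (u * b) = (cmod u)\<^sup>2 * cross a b"
  unfolding cross_def cmod_power2 by (simp add: algebra_simps power2_eq_square)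

lemma cross_sgn_mult_sgn_mult: "u \<noteq> 0 \<Longrightarrow> cross (sgn u * a) (sgn u * b) = cross a b"
  by (simp add: cross_mult_mult norm_sgn)

lemma cross_cnj_cnj: "cross (cnj a) (cnj b) = - cross a b"
  by (simp add: cross_def)

lemma cross_eq_inner: "cross a b = inner (\<i> * a) b"
  by (simp add: cross_def inner_complex_def)

lemma convex_cross_ge: "convex {z. c \<le> cross e (z - p)}"
  using convex_halfspace_ge[of "c + cross e p" "\<i> * e"]
  by (simp add: cross_diff_right cross_eq_inner[symmetric] algebra_simps)

lemma convex_cross_eq: "convex {z. cross e (z - p) = c}"
  using convex_hyperplane[of "\<i> * e" "c + cross e p"]
  by (simp add: cross_diff_right cross_eq_inner[symmetric] algebra_simps)

lemma collinear_iff_cross: "collinear {x, y, z} \<longleftrightarrow> cross (y - x) (z - y) = 0"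
proof -
  have "collinear {x, y, z} \<longleftrightarrow> collinear {0, x - y, z - y}"
    by (auto simp add: collinear_def)
  also have "\<dots> \<longleftrightarrow> (z - y) / (x - y) \<in> \<real>"
    by (rule collinear_iff_Reals)
  also have "\<dots> \<longleftrightarrow> cross (y - x) (z - y) = 0"
    by (auto simp add: complex_is_Real_iff cross_def Im_divide algebra_simps)
  finally show ?thesis .
qed

lemma norm_edir: "V (nxt i) \<noteq> V i \<Longrightarrow> cmod (edir V i) = 1"
  by (simp add: edir_def norm_divide)

lemma edge_eq_length_mult_edir: "V (nxt i) - V i = of_real (cmod (V (nxt i) - V i)) * edir V i"
  by (cases "V (nxt i) = V i") (simp_all add: edir_def)

section \<open>Invariance under similarities\<close>

lemma closed_segment_affine:
  fixes a b x y :: complex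
  shows "closed_segment (a * x + b) (a * y + b) = (\<lambda>z. a * z + b) ` closed_segment x y"
  using closed_segment_translation[of b "a * x" "a * y"]
    closed_segment_linear_image[OF bounded_linear.linear[OF bounded_linear_mult_right], of a x y]
  by (simp add: image_image add.commute)

lemma closed_segment_cnj: "closed_segment (cnj x) (cnj y) = cnj ` closed_segment x y"
  by (rule closed_segment_linear_image[OF bounded_linear.linear[OF bounded_linear_cnj]])

lemma folded_ribbon_3stick_transfer:
  assumes "folded_ribbon_3stick V w" and "inj g"
    and "\<not> collinear {V' 0, V' 1, V' 2}" and "w' > 0"
    and "\<And>i. fold_line V' w' i \<subseteq> g ` fold_line V w i"
  shows "folded_ribbon_3stick V' w'"
  unfolding folded_ribbon_3stick_def
proof (intro conjI allI impI)
  fix i j :: nat assume "i < 3" "j < 3" "i \<noteq> j"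
  then have "g ` fold_line V w i \<inter> g ` fold_line V w j = {}"
    using assms(1,2) by (simp add: folded_ribbon_3stick_def image_Int[symmetric])
  then show "fold_line V' w' i \<inter> fold_line V' w' j = {}"
    using assms(5)[of i] assms(5)[of j] by blast
qed (use assms in auto)

context
  fixes a b :: complex
  assumes a: "a \<noteq> 0"
begin

lemma edir_affine: "edir (\<lambda>i. a * V i + b) i = sgn a * edir V i"
proof -
  have "a * V (nxt i) + b - (a * V i + b) = a * (V (nxt i) - V i)"
    by (simp add: algebra_simps)
  then show ?thesis
    using a unfolding edir_def
    by (simp only:) (simp add: norm_mult sgn_div_norm scaleR_conv_of_real divide_inverse ac_simps)
qed

lemma fdir_affine: "fdir (\<lambda>i. a * V i + b) i = sgn a * fdir V i"
  by (simp add: fdir_def edir_affine ring_distribs)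

lemma fold_end_affine:
  "fold_end (\<lambda>i. a * V i + b) (cmod a * w) i j \<sigma> = a * fold_end V w i j \<sigma> + b"
  using a unfolding fold_end_def fdir_affine edir_affine cross_sgn_mult_sgn_mult[OF a]
  by (simp add: sgn_div_norm scaleR_conv_of_real field_simps)

lemma ribbon_Lk_affine: "ribbon_Lk (\<lambda>i. a * V i + b) (cmod a * w) F = ribbon_Lk V w F"
proof -
  have inj: "inj (\<lambda>z. a * z + b)"
    using a by (auto simp: inj_on_def)
  show ?thesis
    unfolding ribbon_Lk_def crossing_sign_def diag_edge_def bdry_seg_def
      edir_affine cross_sgn_mult_sgn_mult[OF a] fold_end_affine closed_segment_affine
      image_Int[OF inj, symmetric] image_is_empty
    by (rule refl)
qed

lemma fold_line_affine_subset:
  "fold_line (\<lambda>i. a * V i + b) (cmod a * w) i \<subseteq> (\<lambda>z. a * z + b) ` fold_line V w i"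
proof
  fix z assume "z \<in> fold_line (\<lambda>i. a * V i + b) (cmod a * w) i"
  then obtain s where s: "z = a * V i + b + of_real s * (sgn a * fdir V i)"
      "\<bar>s * cross (edir V i) (fdir V i)\<bar> \<le> cmod a * w / 2"
    unfolding fold_line_def fdir_affine edir_affine cross_sgn_mult_sgn_mult[OF a] by blast
  have "z = a * (V i + of_real (s / cmod a) * fdir V i) + b"
    using s(1) a by (simp add: sgn_div_norm scaleR_conv_of_real field_simps)
  moreover have "\<bar>(s / cmod a) * cross (edir V i) (fdir V i)\<bar> \<le> w / 2"
    using s(2) a by (simp add: abs_mult field_simps)
  ultimately show "z \<in> (\<lambda>z. a * z + b) ` fold_line V w i"
    unfolding fold_line_def by blast
qed

lemma folded_ribbon_3stick_affine:
  assumes "folded_ribbon_3stick V w"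
  shows "folded_ribbon_3stick (\<lambda>i. a * V i + b) (cmod a * w)"
proof (rule folded_ribbon_3stick_transfer[OF assms _ _ _ fold_line_affine_subset])
  show "inj (\<lambda>z. a * z + b)"
    using a by (auto simp: inj_on_def)
  have "a * V 1 + b - (a * V 0 + b) = a * (V 1 - V 0)" "a * V 2 + b - (a * V 1 + b) = a * (V 2 - V 1)"
    by (simp_all add: algebra_simps)
  then show "\<not> collinear {a * V 0 + b, a * V 1 + b, a * V 2 + b}"
    using assms a by (simp add: collinear_iff_cross folded_ribbon_3stick_def cross_mult_mult)
  show "cmod a * w > 0"
    using assms a by (simp add: folded_ribbon_3stick_def)
qed

lemma ribbonlength_affine: "ribbonlength (\<lambda>i. a * V i + b) (cmod a * w) = ribbonlength V w"
proof -
  have "cmod (a * V (nxt i) + b - (a * V i + b)) = cmod a * cmod (V (nxt i) - V i)" for i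
    by (simp add: norm_mult[symmetric] algebra_simps)
  then show ?thesis
    using a by (simp add: ribbonlength_def diag_len_def sum_distrib_left[symmetric])
qed

end

lemma inj_cnj: "inj cnj"
  by (auto simp: inj_on_def)

lemma edir_cnj: "edir (\<lambda>i. cnj (V i)) i = cnj (edir V i)"
  by (simp add: edir_def complex_cnj_diff[symmetric] del: complex_cnj_diff)

lemma fdir_cnj: "fdir (\<lambda>i. cnj (V i)) i = cnj (fdir V i)"
  by (simp add: fdir_def edir_cnj)

lemma fold_end_cnj: "fold_end (\<lambda>i. cnj (V i)) w i j \<sigma> = cnj (fold_end V w i j (-\<sigma>))"
  by (simp add: fold_end_def fdir_cnj edir_cnj cross_cnj_cnj)

lemma ribbon_Lk_cnj: "ribbon_Lk (\<lambda>i. cnj (V i)) w F = - ribbon_Lk V w F"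
proof -
  have meets: "(diag_edge (\<lambda>i. cnj (V i)) j \<inter> bdry_seg (\<lambda>i. cnj (V i)) w k \<sigma> \<noteq> {})
      = (diag_edge V j \<inter> bdry_seg V w k (-\<sigma>) \<noteq> {})" for j k \<sigma>
    unfolding diag_edge_def bdry_seg_def fold_end_cnj complex_cnj_diff[symmetric] closed_segment_cnj
      image_Int[OF inj_cnj, symmetric] image_is_empty ..
  have sign: "crossing_sign (\<lambda>i. cnj (V i)) F j k = - crossing_sign V F j k" for j k
    by (simp add: crossing_sign_def edir_cnj cross_cnj_cnj sgn_minus)
  have "(\<Sum>\<sigma>\<in>{-1, 1::real}. if diag_edge (\<lambda>i. cnj (V i)) j \<inter> bdry_seg (\<lambda>i. cnj (V i)) w k \<sigma> \<noteq> {}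
          then crossing_sign (\<lambda>i. cnj (V i)) F j k else 0)
      = - (\<Sum>\<sigma>\<in>{-1, 1::real}. if diag_edge V j \<inter> bdry_seg V w k \<sigma> \<noteq> {}
          then crossing_sign V F j k else 0)" for j k
    by (simp add: meets sign)
  then show ?thesis
    unfolding ribbon_Lk_def by (simp only: sum_negf)
qed

lemma fold_line_cnj_subset: "fold_line (\<lambda>i. cnj (V i)) w i \<subseteq> cnj ` fold_line V w i"
proof
  fix z assume "z \<in> fold_line (\<lambda>i. cnj (V i)) w i"
  then obtain s where "z = cnj (V i + of_real s * fdir V i)" "\<bar>s * cross (edir V i) (fdir V i)\<bar> \<le> w / 2"
    by (auto simp: fold_line_def fdir_cnj edir_cnj cross_cnj_cnj)
  then show "z \<in> cnj ` fold_line V w i"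
    unfolding fold_line_def by blast
qed

lemma folded_ribbon_3stick_cnj:
  assumes "folded_ribbon_3stick V w"
  shows "folded_ribbon_3stick (\<lambda>i. cnj (V i)) w"
proof (rule folded_ribbon_3stick_transfer[OF assms inj_cnj _ _ fold_line_cnj_subset])
  show "\<not> collinear {cnj (V 0), cnj (V 1), cnj (V 2)}"
    using assms by (simp add: collinear_iff_cross folded_ribbon_3stick_def
        complex_cnj_diff[symmetric] cross_cnj_cnj del: complex_cnj_diff)
  show "w > 0"
    using assms by (simp add: folded_ribbon_3stick_def)
qed

lemma ribbonlength_cnj: "ribbonlength (\<lambda>i. cnj (V i)) w = ribbonlength V w"
  by (simp add: ribbonlength_def diag_len_def complex_cnj_diff[symmetric] del: complex_cnj_diff)

section \<open>The lower bound\<close>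

(* For unit vectors with b = a e^(i theta) this is (1 + cos theta) / sin theta = cot (theta / 2). *)
definition half_angle_cot :: "complex \<Rightarrow> complex \<Rightarrow> real" where
  "half_angle_cot a b = (1 + Re (cnj a * b)) / cross a b"

(* The turning angle at a vertex is pi minus the interior angle alpha, so this is tan (alpha / 2). *)
definition vertex_cot :: "(nat \<Rightarrow> complex) \<Rightarrow> nat \<Rightarrow> real" where
  "vertex_cot V i = half_angle_cot (edir V (prv i)) (edir V i)"

(* a, b, c are the directions of three consecutive edges; the fold lines at the two ends of the
   middle edge, of length l, have directions a + b and b + c. *)
lemma fold_lines_meet:
  assumes b: "cmod b = 1" and ab: "cross a b \<noteq> 0" and bc: "cross b c \<noteq> 0"
    and q: "half_angle_cot a b + half_angle_cot b c \<noteq> 0"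
  obtains s t where "of_real s * (a + b) = of_real l * b + of_real t * (b + c)"
    and "\<bar>s * cross b (a + b)\<bar> = \<bar>l\<bar> / \<bar>half_angle_cot a b + half_angle_cot b c\<bar>"
    and "\<bar>t * cross c (b + c)\<bar> = \<bar>l\<bar> / \<bar>half_angle_cot a b + half_angle_cot b c\<bar>"
proof -
  define h where "h = - l / (half_angle_cot a b + half_angle_cot b c)"
  define s where "s = - h / cross a b"
  define t where "t = h / cross b c"
  define X where "X = of_real s * (a + b) - of_real t * (b + c) - of_real l * b"
  have bb: "cnj b * b = 1"
    using b by (simp add: complex_norm_square[symmetric] mult.commute)
  have "cnj b * X = of_real s * (cnj b * a + cnj b * b) - of_real t * (cnj b * b + cnj b * c)
      - of_real l * (cnj b * b)"
    unfolding X_def by (simp add: algebra_simps)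
  then have bX: "cnj b * X = of_real s * (cnj b * a + 1) - of_real t * (1 + cnj b * c) - of_real l"
    unfolding bb by simp
  have "s * (1 + Re (cnj a * b)) = - h * half_angle_cot a b"
      and "t * (1 + Re (cnj b * c)) = h * half_angle_cot b c"
    using ab bc by (simp_all add: s_def t_def half_angle_cot_def)
  moreover have "h * (half_angle_cot a b + half_angle_cot b c) = - l"
    using q by (simp add: h_def)
  moreover have "Re (cnj b * a) = Re (cnj a * b)"
    by (simp add: algebra_simps)
  ultimately have re: "Re (cnj b * X) = 0"
    unfolding bX by (simp add: algebra_simps)
  have "Im (cnj b * a) = - cross a b" "Im (cnj b * c) = cross b c"
    by (simp_all add: cross_def algebra_simps)
  then have im: "Im (cnj b * X) = 0"
    unfolding bX using ab bc by (simp add: s_def t_def)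
  from re im have "cnj b * X = 0"
    by (simp add: complex_eq_iff)
  then have "X = 0"
    using b by auto
  moreover have "\<bar>s * cross b (a + b)\<bar> = \<bar>h\<bar>" "\<bar>t * cross c (b + c)\<bar> = \<bar>h\<bar>"
    using ab bc by (simp_all add: s_def t_def cross_add_right cross_swap[of b a] cross_swap[of c b])
  ultimately show thesis
    using that by (simp add: X_def h_def abs_divide algebra_simps)
qed

(* Otherwise the common point of the two fold lines would lie within the width of the ribbon. *)
lemma long_edge_if_fold_lines_disjoint:
  assumes f: "folded_ribbon_3stick V w" and i: "i < 3" and edge: "V (nxt i) \<noteq> V i"
    and turn_i: "cross (edir V (prv i)) (edir V i) \<noteq> 0"
    and turn_nxt: "cross (edir V i) (edir V (nxt i)) \<noteq> 0"
  shows "w / 2 * \<bar>vertex_cot V i + vertex_cot V (nxt i)\<bar> < cmod (V (nxt i) - V i)"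
proof (cases "vertex_cot V i + vertex_cot V (nxt i) = 0")
  case True
  then show ?thesis
    using edge by simp
next
  case False
  let ?l = "cmod (V (nxt i) - V i)" and ?q = "vertex_cot V i + vertex_cot V (nxt i)"
  have fdir_nxt: "fdir V (nxt i) = edir V i + edir V (nxt i)" and vertex_cot_nxt:
      "vertex_cot V (nxt i) = half_angle_cot (edir V i) (edir V (nxt i))"
    by (simp_all add: fdir_def vertex_cot_def prv_nxt[OF i])
  obtain s t where meet: "of_real s * fdir V i = of_real ?l * edir V i + of_real t * fdir V (nxt i)"
    and s: "\<bar>s * cross (edir V i) (fdir V i)\<bar> = ?l / \<bar>?q\<bar>"
    and t: "\<bar>t * cross (edir V (nxt i)) (fdir V (nxt i))\<bar> = ?l / \<bar>?q\<bar>"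
    using fold_lines_meet[OF norm_edir[OF edge] turn_i turn_nxt, of ?l] False
    unfolding fdir_nxt vertex_cot_nxt by (auto simp: fdir_def vertex_cot_def)
  show ?thesis
  proof (rule ccontr)
    assume "\<not> ?thesis"
    then have "?l / \<bar>?q\<bar> \<le> w / 2"
      using False by (simp add: field_simps)
    then have "V i + of_real s * fdir V i \<in> fold_line V w i"
      and "V (nxt i) + of_real t * fdir V (nxt i) \<in> fold_line V w (nxt i)"
      using s t unfolding fold_line_def by auto
    moreover have "V i + of_real s * fdir V i = V (nxt i) + of_real t * fdir V (nxt i)"
      using meet edge_eq_length_mult_edir[of V i] by (simp add: algebra_simps)
    moreover have "fold_line V w i \<inter> fold_line V w (nxt i) = {}"
      using f i nxt_less_3[OF i] nxt_neq[OF i] by (simp add: folded_ribbon_3stick_def)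
    ultimately show False
      by auto
  qed
qed

(* The turning angles of any three unit vectors e0 -> e1 -> e2 -> e0 add up to a multiple of 2 pi.
   With z_k the unit quotients, P = (1 + cnj z0) (1 + cnj z1) (1 + cnj z2) satisfies
   cnj P = z0 z1 z2 P = P, and Im P = 0 is the cotangent identity. *)
lemma half_angle_cot_identity:
  assumes "cmod e0 = 1" "cmod e1 = 1" "cmod e2 = 1"
    and "cross e2 e0 \<noteq> 0" "cross e0 e1 \<noteq> 0" "cross e1 e2 \<noteq> 0"
  shows "half_angle_cot e2 e0 * half_angle_cot e0 e1 + half_angle_cot e0 e1 * half_angle_cot e1 e2
       + half_angle_cot e1 e2 * half_angle_cot e2 e0 = 1"
proof -
  define z0 where "z0 = cnj e2 * e0"
  define z1 where "z1 = cnj e0 * e1"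
  define z2 where "z2 = cnj e1 * e2"
  have unit: "e0 * cnj e0 = 1" "e1 * cnj e1 = 1" "e2 * cnj e2 = 1"
    using assms(1-3) by (simp_all add: complex_norm_square[symmetric])
  have "z0 * z1 * z2 = (e0 * cnj e0) * (e1 * cnj e1) * (e2 * cnj e2)"
    by (simp add: z0_def z1_def z2_def algebra_simps)
  then have z012: "z0 * z1 * z2 = 1"
    using unit by simp
  have "z0 * cnj z0 = (e0 * cnj e0) * (e2 * cnj e2)" "z1 * cnj z1 = (e0 * cnj e0) * (e1 * cnj e1)"
      "z2 * cnj z2 = (e1 * cnj e1) * (e2 * cnj e2)"
    by (simp_all add: z0_def z1_def z2_def algebra_simps)
  then have hz: "1 + z0 = z0 * (1 + cnj z0)" "1 + z1 = z1 * (1 + cnj z1)" "1 + z2 = z2 * (1 + cnj z2)"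
    using unit by (simp_all add: algebra_simps)
  define P where "P = (1 + cnj z0) * (1 + cnj z1) * (1 + cnj z2)"
  have "cnj P = (1 + z0) * (1 + z1) * (1 + z2)"
    by (simp add: P_def)
  also have "\<dots> = (z0 * z1 * z2) * P"
    unfolding hz P_def by (simp add: ac_simps)
  finally have "cnj P = P"
    using z012 by simp
  then have "Im P = 0"
    by (simp add: complex_eq_iff)
  moreover have "Im P = Im z0 * Im z1 * Im z2 - ((1 + Re z0) * (1 + Re z1) * Im z2
      + (1 + Re z0) * Im z1 * (1 + Re z2) + Im z0 * (1 + Re z1) * (1 + Re z2))"
    unfolding P_def by (simp add: algebra_simps)
  moreover have "Im z0 \<noteq> 0" "Im z1 \<noteq> 0" "Im z2 \<noteq> 0"
    using assms(4-6) by (simp_all add: z0_def z1_def z2_def cross_def)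
  moreover have "(a0 / i0) * (a1 / i1) + (a1 / i1) * (a2 / i2) + (a2 / i2) * (a0 / i0) = 1"
    if "i0 \<noteq> 0" "i1 \<noteq> 0" "i2 \<noteq> 0" "a0 * a1 * i2 + a0 * i1 * a2 + i0 * a1 * a2 = i0 * i1 * i2"
    for a0 a1 a2 i0 i1 i2 :: real
    using that by (simp add: field_simps)
  ultimately show ?thesis
    by (simp add: half_angle_cot_def z0_def z1_def z2_def cross_def)
qed

lemma sqrt_3_le_sum_if_pairwise_products_sum_1:
  fixes x y z :: real
  assumes "0 \<le> x" "0 \<le> y" "0 \<le> z" and "x * y + y * z + z * x = 1"
  shows "sqrt 3 \<le> x + y + z"
proof (rule real_le_lsqrt)
  have "(x + y + z)\<^sup>2 - 3 * (x * y + y * z + z * x) = ((x - y)\<^sup>2 + (y - z)\<^sup>2 + (z - x)\<^sup>2) / 2"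
    by (simp add: power2_eq_square algebra_simps)
  then show "3 \<le> (x + y + z)\<^sup>2"
    using assms(4) by (smt (verit) divide_nonneg_pos zero_le_power2)
qed (use assms in simp)

lemma one_plus_Re_cnj_mult_pos:
  assumes "cmod a = 1" "cmod b = 1" "cross a b \<noteq> 0"
  shows "0 < 1 + Re (cnj a * b)"
proof -
  define z where "z = cnj a * b"
  have "(Re z)\<^sup>2 + (Im z)\<^sup>2 = 1"
    using assms(1,2) cmod_power2[of z] by (simp add: z_def norm_mult)
  moreover have "Im z \<noteq> 0"
    using assms(3) by (simp add: z_def cross_def)
  ultimately have "(Re z)\<^sup>2 < 1"
    by (smt (verit) zero_less_power2)
  then have "0 < 1 + Re z"
    by (simp add: abs_square_less_1 flip: abs_less_iff)
  then show ?thesis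
    by (simp add: z_def)
qed

lemma triangle_edge_nonzero:
  assumes "\<not> collinear {V 0, V 1, V 2}" and "i < 3"
  shows "V (nxt i) \<noteq> V i"
  using assms by (cases rule: less_3_cases[OF assms(2)]) (auto simp: insert_commute)

lemma triangle_signed_area_rotate:
  "i < 3 \<Longrightarrow> cross (V i - V (prv i)) (V (nxt i) - V i) = cross (V 1 - V 0) (V 2 - V 1)"
  by (erule less_3_cases) (simp_all add: cross_def algebra_simps)

lemma sgn_cross_edir_prv_edir:
  assumes nc: "\<not> collinear {V 0, V 1, V 2}" and i: "i < 3"
  shows "sgn (cross (edir V (prv i)) (edir V i)) = sgn (cross (V 1 - V 0) (V 2 - V 1))"
proof -
  have prv: "prv i < 3" "nxt (prv i) = i"
    using i by (simp_all add: prv_less_3 nxt_prv)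
  let ?l = "\<lambda>j. cmod (V (nxt j) - V j)"
  have "V i - V (prv i) = of_real (?l (prv i)) * edir V (prv i)"
    using edge_eq_length_mult_edir[of V "prv i"] unfolding prv(2) .
  moreover have "V (nxt i) - V i = of_real (?l i) * edir V i"
    by (rule edge_eq_length_mult_edir)
  ultimately have "cross (V i - V (prv i)) (V (nxt i) - V i)
      = cross (of_real (?l (prv i)) * edir V (prv i)) (of_real (?l i) * edir V i)"
    by (rule arg_cong2)
  then have "cross (V 1 - V 0) (V 2 - V 1) = ?l (prv i) * ?l i * cross (edir V (prv i)) (edir V i)"
    unfolding triangle_signed_area_rotate[OF i] by (simp add: cross_of_real_left cross_of_real_right)
  moreover have "?l (prv i) > 0" "?l i > 0"
    using triangle_edge_nonzero[OF nc prv(1)] triangle_edge_nonzero[OF nc i] prv(2) by auto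
  ultimately show ?thesis
    by (simp add: sgn_mult)
qed

lemma sgn_vertex_cot:
  assumes nc: "\<not> collinear {V 0, V 1, V 2}" and i: "i < 3"
  shows "sgn (vertex_cot V i) = sgn (cross (V 1 - V 0) (V 2 - V 1))"
    and "cross (edir V (prv i)) (edir V i) \<noteq> 0"
proof -
  have "prv i < 3" "nxt (prv i) = i"
    using i by (simp_all add: prv_less_3 nxt_prv)
  then have units: "cmod (edir V (prv i)) = 1" "cmod (edir V i) = 1"
    using i by (metis nc norm_edir triangle_edge_nonzero)+
  show turn: "cross (edir V (prv i)) (edir V i) \<noteq> 0"
    using sgn_cross_edir_prv_edir[OF assms] nc by (metis collinear_iff_cross sgn_0_0)
  have "sgn (vertex_cot V i) = sgn (cross (edir V (prv i)) (edir V i))"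
    using one_plus_Re_cnj_mult_pos[OF units turn]
    by (simp add: vertex_cot_def half_angle_cot_def sgn_if zero_less_divide_iff divide_less_0_iff)
  then show "sgn (vertex_cot V i) = sgn (cross (V 1 - V 0) (V 2 - V 1))"
    using sgn_cross_edir_prv_edir[OF assms] by simp
qed

theorem ribbonlength_ge_sqrt_3:
  assumes f: "folded_ribbon_3stick V w"
  shows "sqrt 3 \<le> ribbonlength V w"
proof -
  have nc: "\<not> collinear {V 0, V 1, V 2}" and w: "0 < w"
    using f by (simp_all add: folded_ribbon_3stick_def)
  let ?q = "vertex_cot V" and ?l = "\<lambda>i. cmod (V (nxt i) - V i)"
  have "cross (V 1 - V 0) (V 2 - V 1) \<noteq> 0"
    using nc collinear_iff_cross by metis
  then have same_sign: "\<bar>?q i + ?q j\<bar> = \<bar>?q i\<bar> + \<bar>?q j\<bar>" "?q i * ?q j = \<bar>?q i\<bar> * \<bar>?q j\<bar>"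
    if "i < 3" "j < 3" for i j
    using sgn_vertex_cot(1)[OF nc that(1)] sgn_vertex_cot(1)[OF nc that(2)]
    by (auto simp: sgn_if abs_if split: if_splits)
  have turn: "cross (edir V (prv i)) (edir V i) \<noteq> 0" if "i < 3" for i
    using sgn_vertex_cot(2)[OF nc that] .
  have long: "w / 2 * (\<bar>?q i\<bar> + \<bar>?q (nxt i)\<bar>) < ?l i" if "i < 3" for i
    using long_edge_if_fold_lines_disjoint[OF f that triangle_edge_nonzero[OF nc that] turn[OF that]]
      turn[OF nxt_less_3[OF that]] same_sign(1)[OF that nxt_less_3[OF that]]
    by (simp add: prv_nxt[OF that])
  have "cmod (edir V i) = 1" if "i < 3" for i
    using norm_edir triangle_edge_nonzero[OF nc that] .
  then have "?q 0 * ?q 1 + ?q 1 * ?q 2 + ?q 2 * ?q 0 = 1"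
    using half_angle_cot_identity[of "edir V 0" "edir V 1" "edir V 2"] turn[of 0] turn[of 1] turn[of 2]
    by (simp add: vertex_cot_def)
  then have "\<bar>?q 0\<bar> * \<bar>?q 1\<bar> + \<bar>?q 1\<bar> * \<bar>?q 2\<bar> + \<bar>?q 2\<bar> * \<bar>?q 0\<bar> = 1"
    using same_sign(2)[of 0 1] same_sign(2)[of 1 2] same_sign(2)[of 2 0] by simp
  then have "sqrt 3 \<le> \<bar>?q 0\<bar> + \<bar>?q 1\<bar> + \<bar>?q 2\<bar>"
    by (intro sqrt_3_le_sum_if_pairwise_products_sum_1) simp_all
  then have "w * sqrt 3 \<le> w * (\<bar>?q 0\<bar> + \<bar>?q 1\<bar> + \<bar>?q 2\<bar>)"
    using w by simp
  moreover have "w * (\<bar>?q 0\<bar> + \<bar>?q 1\<bar> + \<bar>?q 2\<bar>) < diag_len V"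
    using long[of 0] long[of 1] long[of 2] by (simp add: diag_len_def sum_less_3 algebra_simps)
  ultimately have "w * sqrt 3 < diag_len V"
    by linarith
  then show ?thesis
    using w by (simp add: ribbonlength_def field_simps)
qed

section \<open>The equilateral ribbon\<close>

lemma bdry_seg_subset_parallel_line:
  assumes "cross (edir V k) (fdir V k) \<noteq> 0" and "cross (edir V k) (fdir V (nxt k)) \<noteq> 0"
  shows "bdry_seg V w k \<sigma> \<subseteq> {z. cross (edir V k) (z - V k) = \<sigma> * w / 2}"
proof -
  have "cross (edir V k) (V (nxt k) - V k) = 0"
    by (subst edge_eq_length_mult_edir) (simp add: cross_of_real_right)
  then have on_edge: "cross (edir V k) (V i - V k) = 0" if "i = k \<or> i = nxt k" for i
    using that by (auto simp: cross_def)
  have "cross (edir V k) (fold_end V w i k \<sigma> - V k) = \<sigma> * w / 2"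
    if "i = k \<or> i = nxt k" and "cross (edir V k) (fdir V i) \<noteq> 0" for i
  proof -
    have "fold_end V w i k \<sigma> - V k
        = (V i - V k) + of_real (\<sigma> * w / (2 * cross (edir V k) (fdir V i))) * fdir V i"
      by (simp add: fold_end_def)
    then show ?thesis
      using on_edge[OF that(1)] that(2) by (simp only: cross_add_right cross_of_real_right) simp
  qed
  then show ?thesis
    using assms unfolding bdry_seg_def by (intro closed_segment_subset convex_cross_eq) auto
qed

lemma diag_edge_subset_halfplane:
  assumes "\<forall>i<3. c \<le> cross e (V i - p)" and "j < 3"
  shows "diag_edge V j \<subseteq> {z. c \<le> cross e (z - p)}"
  using assms nxt_less_3 unfolding diag_edge_def by (intro closed_segment_subset convex_cross_ge) auto

lemma diag_edge_misses_outer_bdry_seg: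
  assumes "0 < w" and "cross (edir V k) (fdir V k) \<noteq> 0" and "cross (edir V k) (fdir V (nxt k)) \<noteq> 0"
    and "\<forall>i<3. 0 \<le> cross (edir V k) (V i - V k)" and "j < 3"
  shows "diag_edge V j \<inter> bdry_seg V w k (-1) = {}"
  using diag_edge_subset_halfplane[OF assms(4,5)] bdry_seg_subset_parallel_line[OF assms(2,3), of w "-1"]
    assms(1) by force

lemma ribbon_Lk_eq_half_sum_crossing_sign:
  assumes "\<And>j k. j < 3 \<Longrightarrow> k < 3 \<Longrightarrow> j \<noteq> k \<Longrightarrow> diag_edge V j \<inter> bdry_seg V w k 1 \<noteq> {}"
    and "\<And>j k. j < 3 \<Longrightarrow> k < 3 \<Longrightarrow> j \<noteq> k \<Longrightarrow> diag_edge V j \<inter> bdry_seg V w k (-1) = {}"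
  shows "ribbon_Lk V w F = 1/2 * (\<Sum>j<3. \<Sum>k\<in>{..<3} - {j}. crossing_sign V F j k)"
  unfolding ribbon_Lk_def using assms by (auto intro!: sum.cong)

lemma closed_segments_meet:
  fixes a b c d :: "'a :: real_vector"
  assumes "0 \<le> u" "u \<le> 1" "0 \<le> p" "0 \<le> q" "0 < p + q"
    and "(p + q) *\<^sub>R ((1 - u) *\<^sub>R a + u *\<^sub>R b) = q *\<^sub>R c + p *\<^sub>R d"
  shows "closed_segment a b \<inter> closed_segment c d \<noteq> {}"
proof -
  let ?v = "p / (p + q)"
  have "1 - ?v = inverse (p + q) * q" "?v = inverse (p + q) * p"
    using assms(5) by (simp_all add: field_simps)
  then have "(1 - ?v) *\<^sub>R c + ?v *\<^sub>R d = inverse (p + q) *\<^sub>R (q *\<^sub>R c + p *\<^sub>R d)"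
    by (simp add: scaleR_add_right)
  also have "\<dots> = (1 - u) *\<^sub>R a + u *\<^sub>R b"
    using assms(5) unfolding assms(6)[symmetric] by simp
  finally have "(1 - u) *\<^sub>R a + u *\<^sub>R b = (1 - ?v) *\<^sub>R c + ?v *\<^sub>R d" ..
  moreover have "0 \<le> ?v" "?v \<le> 1"
    using assms(3-5) by simp_all
  ultimately have "(1 - u) *\<^sub>R a + u *\<^sub>R b \<in> closed_segment c d"
    unfolding in_segment by blast
  moreover have "(1 - u) *\<^sub>R a + u *\<^sub>R b \<in> closed_segment a b"
    using assms(1,2) unfolding in_segment by blast
  ultimately show ?thesis
    by blast
qed

(* The unit equilateral triangle with ribbon width w = m sqrt 3; at w = sqrt 3 adjacent fold lines
   would meet. *)
locale unit_equilateral =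
  fixes U :: "nat \<Rightarrow> complex" and m :: real
  assumes U0: "U 0 = 0" and U1: "U 1 = 1" and U2: "U 2 = Complex (1/2) (sqrt 3 / 2)"
    and m_pos: "0 < m" and m_less_1: "m < 1"
begin

lemma U_simps [simp]: "U 0 = 0" "U (Suc 0) = 1" "U 2 = Complex (1/2) (sqrt 3 / 2)"
  using U0 U1 U2 by simp_all

lemma edges_U:
  "U 1 - U 0 = 1" "U 2 - U 1 = Complex (-1/2) (sqrt 3 / 2)" "U 0 - U 2 = Complex (-1/2) (- sqrt 3 / 2)"
  by (simp_all add: complex_eq_iff)

lemma norm_edges_U: "cmod (U (nxt i) - U i) = 1" if "i < 3"
  using that by (cases rule: less_3_cases) (simp_all add: edges_U[simplified] complex_norm power_divide)

lemma edir_U [simp]: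
  "edir U 0 = 1" "edir U (Suc 0) = Complex (-1/2) (sqrt 3 / 2)" "edir U 2 = Complex (-1/2) (- sqrt 3 / 2)"
  using norm_edges_U[of 0] norm_edges_U[of 1] norm_edges_U[of 2]
  by (simp_all add: edir_def edges_U[simplified])

lemma fdir_U [simp]:
  "fdir U 0 = Complex (1/2) (- sqrt 3 / 2)" "fdir U (Suc 0) = Complex (1/2) (sqrt 3 / 2)"
  "fdir U 2 = Complex (-1) 0"
  by (simp_all add: fdir_def complex_eq_iff)

lemma fold_end_U:
  "fold_end U (m * sqrt 3) 0 0 \<sigma> = Complex (- \<sigma> * m / 2) (\<sigma> * m * sqrt 3 / 2)"
  "fold_end U (m * sqrt 3) 1 0 \<sigma> = Complex (1 + \<sigma> * m / 2) (\<sigma> * m * sqrt 3 / 2)"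
  "fold_end U (m * sqrt 3) 1 1 \<sigma> = Complex (1 - \<sigma> * m / 2) (- \<sigma> * m * sqrt 3 / 2)"
  "fold_end U (m * sqrt 3) 2 1 \<sigma> = Complex (1/2 - \<sigma> * m) (sqrt 3 / 2)"
  "fold_end U (m * sqrt 3) 2 2 \<sigma> = Complex (1/2 + \<sigma> * m) (sqrt 3 / 2)"
  "fold_end U (m * sqrt 3) 0 2 \<sigma> = Complex (\<sigma> * m / 2) (- \<sigma> * m * sqrt 3 / 2)"
  by (simp_all add: fold_end_def cross_def complex_eq_iff field_simps)

lemma bdry_seg_U:
  "bdry_seg U (m * sqrt 3) 0 \<sigma> =
     closed_segment (Complex (- \<sigma> * m / 2) (\<sigma> * m * sqrt 3 / 2))
       (Complex (1 + \<sigma> * m / 2) (\<sigma> * m * sqrt 3 / 2))"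
  "bdry_seg U (m * sqrt 3) 1 \<sigma> =
     closed_segment (Complex (1 - \<sigma> * m / 2) (- \<sigma> * m * sqrt 3 / 2))
       (Complex (1/2 - \<sigma> * m) (sqrt 3 / 2))"
  "bdry_seg U (m * sqrt 3) 2 \<sigma> =
     closed_segment (Complex (1/2 + \<sigma> * m) (sqrt 3 / 2))
       (Complex (\<sigma> * m / 2) (- \<sigma> * m * sqrt 3 / 2))"
  unfolding bdry_seg_def nxt_prv_simps fold_end_U by (simp_all add: fold_end_U[simplified])

lemma diag_edge_U:
  "diag_edge U 0 = closed_segment 0 1"
  "diag_edge U 1 = closed_segment 1 (Complex (1/2) (sqrt 3 / 2))"
  "diag_edge U 2 = closed_segment (Complex (1/2) (sqrt 3 / 2)) 0"
  by (simp_all add: diag_edge_def)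

lemma fold_line_points_U_distinct:
  assumes "i < j" "j < 3" "\<bar>s\<bar> \<le> m" "\<bar>t\<bar> \<le> m"
  shows "U i + of_real s * fdir U i \<noteq> U j + of_real t * fdir U j"
proof -
  have "(s - 1) * sqrt 3 \<noteq> 0" "(s + 1) * sqrt 3 \<noteq> 0"
    using assms(3) m_less_1 by auto
  then have "s * sqrt 3 \<noteq> sqrt 3" "- (s * sqrt 3) \<noteq> sqrt 3"
    by (auto simp: algebra_simps)
  moreover have "(i = 0 \<and> j = 1) \<or> (i = 0 \<and> j = 2) \<or> (i = 1 \<and> j = 2)"
    using assms(1,2) by auto
  ultimately show ?thesis
    using assms(3,4) m_less_1 by (auto simp: complex_eq_iff algebra_simps)
qed

lemma fold_line_U:
  assumes "z \<in> fold_line U (m * sqrt 3) i" and "i < 3"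
  obtains s where "\<bar>s\<bar> \<le> m" and "z = U i + of_real s * fdir U i"
proof -
  obtain s where "z = U i + of_real s * fdir U i" "\<bar>s * cross (edir U i) (fdir U i)\<bar> \<le> m * sqrt 3 / 2"
    using assms(1) unfolding fold_line_def by blast
  moreover have "\<bar>cross (edir U i) (fdir U i)\<bar> = sqrt 3 / 2"
    using assms(2) by (cases rule: less_3_cases) (simp_all add: cross_def)
  ultimately show thesis
    using that by (simp add: abs_mult)
qed

lemma fold_lines_U_disjoint:
  assumes "i < j" and "j < 3"
  shows "fold_line U (m * sqrt 3) i \<inter> fold_line U (m * sqrt 3) j = {}"
proof -
  have False
    if zi: "z \<in> fold_line U (m * sqrt 3) i" and zj: "z \<in> fold_line U (m * sqrt 3) j" for z
  proof -
    obtain s where s: "\<bar>s\<bar> \<le> m" "z = U i + of_real s * fdir U i"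
      using fold_line_U[OF zi] assms by (metis less_trans)
    obtain t where t: "\<bar>t\<bar> \<le> m" "z = U j + of_real t * fdir U j"
      using fold_line_U[OF zj assms(2)] by blast
    show False
      using fold_line_points_U_distinct[OF assms s(1) t(1)] s(2) t(2) by simp
  qed
  then show ?thesis
    by blast
qed

lemma folded_ribbon_3stick_U: "folded_ribbon_3stick U (m * sqrt 3)"
  unfolding folded_ribbon_3stick_def
proof (intro conjI allI impI)
  show "\<not> collinear {U 0, U 1, U 2}"
    by (simp add: collinear_iff_cross cross_def)
  show "0 < m * sqrt 3"
    using m_pos by simp
  fix i j :: nat
  assume "i < 3" "j < 3" "i \<noteq> j"
  then consider "i < j" | "j < i"
    by linarith
  then show "fold_line U (m * sqrt 3) i \<inter> fold_line U (m * sqrt 3) j = {}"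
  proof cases
    case 1
    then show ?thesis
      using fold_lines_U_disjoint[of i j] \<open>j < 3\<close> by blast
  next
    case 2
    then show ?thesis
      using fold_lines_U_disjoint[of j i] \<open>i < 3\<close> by blast
  qed
qed

lemma inner_bdry_seg_meets_diag_edge_U:
  assumes "j < 3" "k < 3" "j \<noteq> k"
  shows "diag_edge U j \<inter> bdry_seg U (m * sqrt 3) k 1 \<noteq> {}"
proof -
  note m = m_pos m_less_1
  have "diag_edge U 0 \<inter> bdry_seg U (m * sqrt 3) 1 1 \<noteq> {}"
    unfolding diag_edge_U bdry_seg_U by (rule closed_segments_meet[of "1 - m" m 1])
      (use m in \<open>simp_all add: complex_eq_iff algebra_simps\<close>)
  moreover have "diag_edge U 0 \<inter> bdry_seg U (m * sqrt 3) 2 1 \<noteq> {}"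
    unfolding diag_edge_U bdry_seg_U by (rule closed_segments_meet[of m 1 m])
      (use m in \<open>simp_all add: complex_eq_iff algebra_simps\<close>)
  moreover have "diag_edge U 1 \<inter> bdry_seg U (m * sqrt 3) 0 1 \<noteq> {}"
    unfolding diag_edge_U bdry_seg_U by (rule closed_segments_meet[of m 1 m])
      (use m in \<open>simp_all add: complex_eq_iff algebra_simps\<close>)
  moreover have "diag_edge U 1 \<inter> bdry_seg U (m * sqrt 3) 2 1 \<noteq> {}"
    unfolding diag_edge_U bdry_seg_U by (rule closed_segments_meet[of "1 - m" m 1])
      (use m in \<open>simp_all add: complex_eq_iff algebra_simps\<close>)
  moreover have "diag_edge U 2 \<inter> bdry_seg U (m * sqrt 3) 0 1 \<noteq> {}"
    unfolding diag_edge_U bdry_seg_U by (rule closed_segments_meet[of "1 - m" m 1])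
      (use m in \<open>simp_all add: complex_eq_iff algebra_simps\<close>)
  moreover have "diag_edge U 2 \<inter> bdry_seg U (m * sqrt 3) 1 1 \<noteq> {}"
    unfolding diag_edge_U bdry_seg_U by (rule closed_segments_meet[of m 1 m])
      (use m in \<open>simp_all add: complex_eq_iff algebra_simps\<close>)
  moreover have "(j, k) \<in> {(0, 1), (0, 2), (1, 0), (1, 2), (2, 0), (2, 1)}"
    using assms by (auto elim!: less_3_cases)
  ultimately show ?thesis
    by auto
qed

(* Only the inner boundary (sigma = 1) meets the diagram; the six crossing signs are
   1, -1, 1, 1, -1, 1. *)
lemma ribbon_Lk_U: "ribbon_Lk U (m * sqrt 3) (\<lambda>i. i = 0) = 1"
proof -
  have "diag_edge U j \<inter> bdry_seg U (m * sqrt 3) k (-1) = {}" if "j < 3" "k < 3" for j k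
    using that(2) by (intro diag_edge_misses_outer_bdry_seg that(1))
      (use m_pos in \<open>auto simp: cross_def elim!: less_3_cases\<close>)
  moreover have "{..<3::nat} - {0} = {1, 2}" "{..<3::nat} - {1} = {0, 2}" "{..<3::nat} - {2} = {0, 1}"
    by auto
  ultimately show ?thesis
    using inner_bdry_seg_meets_diag_edge_U
    by (simp add: ribbon_Lk_eq_half_sum_crossing_sign sum_less_3 crossing_sign_def over_def cross_def)
qed

lemma equilateral_U: "equilateral U"
  using norm_edges_U[of 0] norm_edges_U[of 1] norm_edges_U[of 2] by (simp add: equilateral_def)

lemma ribbonlength_U: "ribbonlength U (m * sqrt 3) = sqrt 3 / m"
proof -
  have "ribbonlength U (m * sqrt 3) = 3 / (m * sqrt 3)"
    using norm_edges_U[of 0] norm_edges_U[of 1] norm_edges_U[of 2]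
    by (simp add: ribbonlength_def diag_len_def sum_less_3)
  also have "\<dots> = sqrt 3 / m"
    by (metis mult.commute real_div_sqrt divide_divide_eq_left zero_le_numeral)
  finally show ?thesis .
qed

lemma similar_ribbon:
  assumes a: "a \<noteq> 0" and V: "V = (\<lambda>i. a * U i + b) \<or> V = (\<lambda>i. a * cnj (U i) + b)"
  shows "folded_ribbon_3stick V (cmod a * (m * sqrt 3))"
    and "\<bar>ribbon_Lk V (cmod a * (m * sqrt 3)) (\<lambda>i. i = 0)\<bar> = 1"
    and "ribbonlength V (cmod a * (m * sqrt 3)) = sqrt 3 / m"
  using V folded_ribbon_3stick_affine[OF a folded_ribbon_3stick_U]
    folded_ribbon_3stick_affine[OF a folded_ribbon_3stick_cnj[OF folded_ribbon_3stick_U]]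
    ribbon_Lk_affine[OF a] ribbon_Lk_cnj[of U] ribbon_Lk_U
    ribbonlength_affine[OF a] ribbonlength_cnj[of U] ribbonlength_U
  by auto

end

lemma equilateral_third_vertex:
  assumes "equilateral V"
  shows "(V 2 - V 0) / (V 1 - V 0) \<in> {Complex (1/2) (sqrt 3 / 2), Complex (1/2) (- sqrt 3 / 2)}"
proof -
  define z where "z = (V 2 - V 0) / (V 1 - V 0)"
  have a: "V 1 - V 0 \<noteq> 0"
    and sides: "cmod (V 2 - V 1) = cmod (V 1 - V 0)" "cmod (V 2 - V 0) = cmod (V 1 - V 0)"
    using assms norm_minus_commute[of "V 0" "V 2"] by (auto simp: equilateral_def)
  have "z - 1 = (V 2 - V 1) / (V 1 - V 0)"
    using a by (simp add: z_def field_simps)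
  then have "cmod z = 1" "cmod (z - 1) = 1"
    using a sides by (simp_all add: z_def norm_divide)
  then have "(Re z)\<^sup>2 + (Im z)\<^sup>2 = 1" "(Re z - 1)\<^sup>2 + (Im z)\<^sup>2 = 1"
    using cmod_power2[of z] cmod_power2[of "z - 1"] by simp_all
  then have re: "Re z = 1/2"
    by (simp add: power2_eq_square algebra_simps)
  moreover have "(Re z)\<^sup>2 = 1/4"
    unfolding re by (simp add: power2_eq_square)
  then have "(Im z)\<^sup>2 = (sqrt 3 / 2)\<^sup>2"
    using \<open>(Re z)\<^sup>2 + (Im z)\<^sup>2 = 1\<close> by (simp add: power_divide)
  ultimately show ?thesis
    unfolding z_def[symmetric] by (auto simp: complex_eq_iff power2_eq_iff)
qed

lemma equilateral_normal_form:
  assumes "equilateral V"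
  obtains a b U where "a \<noteq> 0" and "U 0 = 0" "U 1 = 1" "U 2 = Complex (1/2) (sqrt 3 / 2)"
    and "V = (\<lambda>i. a * U i + b) \<or> V = (\<lambda>i. a * cnj (U i) + b)"
proof -
  define a where "a = V 1 - V 0"
  define b where "b = V 0"
  define U where "U i = (V i - b) / a" for i
  have "a \<noteq> 0"
    using assms by (auto simp: a_def equilateral_def)
  then have V: "V = (\<lambda>i. a * U i + b)" "V = (\<lambda>i. a * cnj (cnj (U i)) + b)"
    by (simp_all add: U_def)
  have U01: "U 0 = 0" "U 1 = 1"
    using \<open>a \<noteq> 0\<close> by (simp_all add: U_def a_def b_def)
  have "U 2 \<in> {Complex (1/2) (sqrt 3 / 2), Complex (1/2) (- sqrt 3 / 2)}"
    using equilateral_third_vertex[OF assms] by (simp only: U_def a_def b_def)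
  then consider "U 2 = Complex (1/2) (sqrt 3 / 2)" | "cnj (U 2) = Complex (1/2) (sqrt 3 / 2)"
    by (auto simp: complex_cnj)
  then show thesis
  proof cases
    case 1
    then show thesis
      using that[OF \<open>a \<noteq> 0\<close> U01] V(1) by blast
  next
    case 2
    have "cnj (U 0) = 0" "cnj (U 1) = 1"
      using U01 by simp_all
    then show thesis
      using that[of a "\<lambda>i. cnj (U i)" b] \<open>a \<noteq> 0\<close> 2 V(2) by blast
  qed
qed

(* The negatively oriented case is the reflection of the model, which flips the sign of Lk. *)
lemma equilateral_attains_ribbonlength:
  assumes "equilateral V" and "sqrt 3 < x"
  shows "\<exists>w F. folded_ribbon_3stick V w \<and> \<bar>ribbon_Lk V w F\<bar> = 1 \<and> ribbonlength V w = x"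
proof -
  obtain a b U where a: "a \<noteq> 0" and U: "U 0 = 0" "U 1 = 1" "U 2 = Complex (1/2) (sqrt 3 / 2)"
    and V: "V = (\<lambda>i. a * U i + b) \<or> V = (\<lambda>i. a * cnj (U i) + b)"
    by (rule equilateral_normal_form[OF assms(1)])
  have "0 < sqrt (3::real)"
    by simp
  then have "0 < x"
    using assms(2) by linarith
  then have m: "0 < sqrt 3 / x" "sqrt 3 / x < 1" and x: "sqrt 3 / (sqrt 3 / x) = x"
    using assms(2) by simp_all
  interpret unit_equilateral U "sqrt 3 / x"
    using U m by unfold_locales
  show ?thesis
    using similar_ribbon[OF a V] unfolding x by blast
qed

lemma equilateral_exists: "\<exists>V. equilateral V"
proof -
  interpret unit_equilateral
      "\<lambda>i. if i = 0 then 0 else if i = 1 then 1 else Complex (1/2) (sqrt 3 / 2)" "1/2"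
    by unfold_locales simp_all
  show ?thesis
    using equilateral_U by blast
qed

lemma Inf_eq_if_greaterThan_subset:
  fixes c :: "'a :: {conditionally_complete_linorder, no_top, dense_linorder}"
  assumes "{c<..} \<subseteq> S" and "S \<subseteq> {c..}"
  shows "Inf S = c"
proof (rule antisym)
  have "bdd_below S"
    using assms(2) by (auto intro: bdd_belowI)
  then show "Inf S \<le> c"
    using cInf_superset_mono[of "{c<..}" S] assms(1) gt_ex[of c] by auto
  have "S \<noteq> {}"
    using assms(1) gt_ex[of c] by auto
  then show "c \<le> Inf S"
    using assms(2) by (intro cInf_greatest) auto
qed

theorem corollary5p6:
  shows "(\<forall>V w F. folded_ribbon_3stick V w \<and> \<bar>ribbon_Lk V w F\<bar> = 1
            \<longrightarrow> ribbonlength V w \<ge> sqrt 3)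
       \<and> Inf {ribbonlength V w | V w F. folded_ribbon_3stick V w \<and> \<bar>ribbon_Lk V w F\<bar> = 1}
           = sqrt 3
       \<and> (\<forall>V. equilateral V \<longrightarrow>
            Inf {ribbonlength V w | w F. folded_ribbon_3stick V w \<and> \<bar>ribbon_Lk V w F\<bar> = 1}
              = sqrt 3)"
proof (intro conjI allI impI)
  let ?S = "\<lambda>V. {ribbonlength V w | w F. folded_ribbon_3stick V w \<and> \<bar>ribbon_Lk V w F\<bar> = 1}"
  have attained: "{sqrt 3<..} \<subseteq> ?S V" if "equilateral V" for V
    using equilateral_attains_ribbonlength[OF that] by fastforce
  have bounded: "?S V \<subseteq> {sqrt 3..}" for V
    using ribbonlength_ge_sqrt_3 by fastforce
  show "sqrt 3 \<le> ribbonlength V w" if "folded_ribbon_3stick V w \<and> \<bar>ribbon_Lk V w F\<bar> = 1" for V w F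
    using ribbonlength_ge_sqrt_3 that by blast
  show "Inf (?S V) = sqrt 3" if "equilateral V" for V
    using attained[OF that] bounded by (rule Inf_eq_if_greaterThan_subset)
  obtain V0 where "equilateral V0"
    using equilateral_exists by blast
  then show "Inf {ribbonlength V w | V w F. folded_ribbon_3stick V w \<and> \<bar>ribbon_Lk V w F\<bar> = 1} = sqrt 3"
    using attained[of V0] ribbonlength_ge_sqrt_3 by (intro Inf_eq_if_greaterThan_subset) fastforce+
qed

end
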